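(* Let $p$ be the transition density of a subordinator as described in the context, and let $q\colon\mathbb{R}\to[0,\infty]$ be measurable. Assume that for some $s<t$, $$\sup_{x<y}\int_s^t\int_{\mathbb{R}}\frac{p(s,x,u,z)p(u,z,t,y)}{p(s,x,t,y)}q(z)\,dz\,du<\infty.$$ Then $q\in L^\infty(\mathbb{R})$.
   Context: A subordinator is a nondecreasing Lévy process on $\mathbb{R}$. We assume its distribution at each time $t>0$ has a density $p_t$ with respect to Lebesgue measure, and set $p(s,x,t,y)=p_{t-s}(y-x)$ for $s<t$; $p(s,x,t,y)=0$ whenever $t\le s$ or $y\le x$, and $p(s,x,t,y)>0$ otherwise. *)

theory Defs
  imports "HOL-Probability.Probability"
begin

text \<open>Levy process: X 0 = 0 a.s., independent increments,
stationary increments, stochastic continuity, and a.s. cadlag paths (for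
nondecreasing paths this is a.s. right-continuity).\<close>

definition subordinator :: "'a measure \<Rightarrow> (real \<Rightarrow> 'a \<Rightarrow> real) \<Rightarrow> bool" where
  "subordinator M X \<longleftrightarrow>
     prob_space M \<and>
     (\<forall>t\<ge>0. X t \<in> borel_measurable M) \<and>
     (AE \<omega> in M. X 0 \<omega> = 0) \<and>
     (AE \<omega> in M. mono_on {0..} (\<lambda>t. X t \<omega>)) \<and>
     (AE \<omega> in M. \<forall>t\<ge>0. continuous (at_right t) (\<lambda>s. X s \<omega>)) \<and>
     (\<forall>(n::nat) (ts::nat \<Rightarrow> real). ts 0 \<ge> 0 \<longrightarrow> mono ts \<longrightarrow>
        prob_space.indep_vars M (\<lambda>_. borel)
          (\<lambda>i \<omega>. X (ts (Suc i)) \<omega> - X (ts i) \<omega>) {..<n}) \<and>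
     (\<forall>s t. 0 \<le> s \<longrightarrow> s \<le> t \<longrightarrow>
        distr M borel (\<lambda>\<omega>. X t \<omega> - X s \<omega>) = distr M borel (X (t - s))) \<and>
     (\<forall>\<epsilon>>0. ((\<lambda>t. measure M {\<omega>\<in>space M. \<bar>X t \<omega>\<bar> > \<epsilon>}) \<longlongrightarrow> 0) (at_right 0))"

text \<open>p t is a density of the law of X t (t > 0), with the version convention of
the paper: p t w > 0 for w > 0 and p t w = 0 for w \<le> 0.\<close>

definition subordinator_density :: "'a measure \<Rightarrow> (real \<Rightarrow> 'a \<Rightarrow> real) \<Rightarrow> (real \<Rightarrow> real \<Rightarrow> real) \<Rightarrow> bool" where
  "subordinator_density M X p \<longleftrightarrow>
     (\<forall>t>0. distributed M lborel (X t) (\<lambda>w. ennreal (p t w))) \<and>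
     (\<forall>t>0. \<forall>w. (w > 0 \<longrightarrow> p t w > 0) \<and> (w \<le> 0 \<longrightarrow> p t w = 0))"

definition trans_dens :: "(real \<Rightarrow> real \<Rightarrow> real) \<Rightarrow> real \<Rightarrow> real \<Rightarrow> real \<Rightarrow> real \<Rightarrow> real" where
  "trans_dens p s x t y = (if s < t \<and> x < y then p (t - s) (y - x) else 0)"

end

theory Submission
  imports Defs
begin

text \<open>Let S bound the bridge integrals and h = y - x > 0. Multiplying the bound by
p(t-s,h) removes the normalisation, so for every x the integral over u in (s,t) and z of
p(u-s,z-x) p(t-u,x+h-z) q(z) is at most S p(t-s,h). Integrating over x in [a,b] and using
Fubini, the x-integral becomes, for z in [a+h,b], the convolution of p(u-s) and p(t-u)
at h, which by the Chapman-Kolmogorov equation is p(t-s,h) for almost every h. Dividing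
by p(t-s,h) > 0 gives (t-s) times the integral of q over [a+h,b] at most S(b-a); letting
h tend to 0 along such h bounds the integral of q over every interval by S/(t-s) times its
length, and a Vitali covering argument turns this into q \<le> S/(t-s) almost everywhere.\<close>

lemma set_nn_integral_le_emeasure_open_of_intervals:
  fixes q :: "real \<Rightarrow> ennreal" and K :: real
  assumes q[measurable]: "q \<in> borel_measurable lborel" and K: "K \<ge> 0"
    and intervals: "\<And>a b. a < b \<Longrightarrow> (\<integral>\<^sup>+z. q z * indicator {a..b} z \<partial>lborel) \<le> ennreal (K * (b - a))"
    and B[measurable]: "B \<in> sets borel" and U: "open U" "B \<subseteq> U"
  shows "(\<integral>\<^sup>+z. q z * indicator B z \<partial>lborel) \<le> ennreal K * emeasure lborel U"
proof -
  define balls where "balls = {(c::real, r::real). 0 < r \<and> cball c r \<subseteq> U}"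
  obtain C where C: "countable C" "C \<subseteq> balls"
    and disj: "pairwise (\<lambda>i j. disjnt (cball (fst i) (snd i)) (cball (fst j) (snd j))) C"
    and covers: "negligible (B - (\<Union>i\<in>C. cball (fst i) (snd i)))"
  proof (rule Vitali_covering_theorem_cballs[of balls snd B fst])
    fix x and d :: real assume "x \<in> B" "0 < d"
    then obtain \<epsilon> where "\<epsilon> > 0" "ball x \<epsilon> \<subseteq> U"
      using U open_contains_ball by blast
    moreover have "cball x (min (d/2) (\<epsilon>/2)) \<subseteq> ball x \<epsilon>"
      using \<open>\<epsilon> > 0\<close> by (auto simp: dist_real_def)
    ultimately have "(x, min (d/2) (\<epsilon>/2)) \<in> balls"
      using \<open>0 < d\<close> by (auto simp: balls_def)
    then show "\<exists>i. i \<in> balls \<and> x \<in> cball (fst i) (snd i) \<and> snd i < d"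
      using \<open>0 < d\<close> \<open>\<epsilon> > 0\<close> by (intro exI[of _ "(x, min (d/2) (\<epsilon>/2))"]) auto
  qed (auto simp: balls_def)
  define V where "V = (\<Union>i\<in>C. cball (fst i) (snd i))"
  have V[measurable]: "V \<in> sets borel"
    unfolding V_def using C(1) by (intro sets.countable_UN'') auto
  have "disjoint_family_on (\<lambda>i. cball (fst i) (snd i)) C"
    using disj unfolding disjoint_family_on_def pairwise_def disjnt_def by blast
  then have emeasure_V: "emeasure N V = (\<integral>\<^sup>+i. emeasure N (cball (fst i) (snd i)) \<partial>count_space C)"
    if "sets N = sets borel" for N :: "real measure"
    unfolding V_def using C(1) that by (intro emeasure_UN_countable) auto
  have "B - V \<in> null_sets lebesgue"
    using covers by (simp add: V_def negligible_iff_null_sets)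
  then have "B - V \<in> null_sets lborel"
    using null_sets_completion_iff[of "B - V" lborel] by simp
  then have "AE z in lborel. q z * indicator B z \<le> q z * indicator V z"
    by (rule AE_not_in[THEN eventually_mono]) (auto split: split_indicator)
  then have "(\<integral>\<^sup>+z. q z * indicator B z \<partial>lborel) \<le> (\<integral>\<^sup>+z. q z * indicator V z \<partial>lborel)"
    by (rule nn_integral_mono_AE)
  also have "\<dots> = emeasure (density lborel q) V"
    by (simp add: emeasure_density)
  also have "\<dots> = (\<integral>\<^sup>+i. emeasure (density lborel q) (cball (fst i) (snd i)) \<partial>count_space C)"
    by (rule emeasure_V) simp
  also have "\<dots> \<le> (\<integral>\<^sup>+i. ennreal K * emeasure lborel (cball (fst i) (snd i)) \<partial>count_space C)"
  proof (intro nn_integral_mono)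
    fix i assume "i \<in> space (count_space C)"
    then have "snd i > 0" using C(2) by (auto simp: balls_def)
    then show "emeasure (density lborel q) (cball (fst i) (snd i))
        \<le> ennreal K * emeasure lborel (cball (fst i) (snd i))"
      using intervals[of "fst i - snd i" "fst i + snd i"] K
      by (simp add: emeasure_density cball_eq_atLeastAtMost ennreal_mult)
  qed
  also have "\<dots> = ennreal K * emeasure lborel V"
    by (simp add: nn_integral_cmult emeasure_V)
  also have "\<dots> \<le> ennreal K * emeasure lborel U"
  proof -
    have "V \<subseteq> U"
      using C(2) by (auto simp: V_def balls_def dest!: subsetD)
    then show ?thesis
      using U(1) by (intro mult_left_mono emeasure_mono) auto
  qed
  finally show ?thesis .
qed

lemma set_nn_integral_le_emeasure_of_intervals:
  fixes q :: "real \<Rightarrow> ennreal" and K :: real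
  assumes q[measurable]: "q \<in> borel_measurable lborel" and K: "K \<ge> 0"
    and intervals: "\<And>a b. a < b \<Longrightarrow> (\<integral>\<^sup>+z. q z * indicator {a..b} z \<partial>lborel) \<le> ennreal (K * (b - a))"
    and B[measurable]: "B \<in> sets borel"
  shows "(\<integral>\<^sup>+z. q z * indicator B z \<partial>lborel) \<le> ennreal K * emeasure lborel B"
proof (rule ennreal_le_epsilon)
  fix e :: real assume "0 < e"
  then have "e / (K + 1) > 0" using K by simp
  then obtain U where U: "open U" "B \<subseteq> U" and "emeasure lborel (U - B) < e / (K + 1)"
    using outer_regular_lborel[OF B] by blast
  then have "emeasure lborel U \<le> emeasure lborel B + e / (K + 1)"
    using emeasure_subadditive[of B lborel "U - B"] U(1)
    by (simp add: Un_absorb1) (metis add_left_mono less_imp_le order_trans)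
  then have "(\<integral>\<^sup>+z. q z * indicator B z \<partial>lborel) \<le> ennreal K * (emeasure lborel B + e / (K + 1))"
    using set_nn_integral_le_emeasure_open_of_intervals[OF q K intervals B U]
    by (metis mult_left_mono order_trans zero_le)
  also have "\<dots> = ennreal K * emeasure lborel B + ennreal K * ennreal (e / (K + 1))"
    by (simp add: distrib_left)
  also have "\<dots> \<le> ennreal K * emeasure lborel B + e"
  proof -
    have "ennreal K * ennreal (e / (K + 1)) = ennreal (K * (e / (K + 1)))"
      using K \<open>0 < e\<close> by (intro ennreal_mult[symmetric]) auto
    also have "\<dots> \<le> e"
      using K \<open>0 < e\<close> by (intro ennreal_leI) (simp add: field_simps)
    finally show ?thesis
      by (rule add_left_mono)
  qed
  finally show "(\<integral>\<^sup>+z. q z * indicator B z \<partial>lborel) \<le> ennreal K * emeasure lborel B + e" .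
qed

lemma AE_le_of_set_nn_integral_le:
  fixes q :: "real \<Rightarrow> ennreal" and K :: real
  assumes q[measurable]: "q \<in> borel_measurable lborel"
    and sets: "\<And>B. B \<in> sets borel \<Longrightarrow> (\<integral>\<^sup>+z. q z * indicator B z \<partial>lborel) \<le> ennreal K * emeasure lborel B"
  shows "AE z in lborel. q z \<le> ennreal K"
proof (rule AE_upper_bound_inf_ennreal)
  fix e :: real assume "0 < e"
  define B where "B n = {z. ennreal K + e < q z} \<inter> {- real n..real n}" for n :: nat
  have [measurable]: "B n \<in> sets borel" for n
    unfolding B_def by measurable
  have "B n \<in> null_sets lborel" for n
  proof -
    have "emeasure lborel (B n) \<le> emeasure lborel {- real n..real n}"
      by (rule emeasure_mono) (auto simp: B_def)
    then have finite: "emeasure lborel (B n) < \<infinity>"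
      by (simp add: le_less_trans)
    have "(ennreal K + e) * emeasure lborel (B n) = (\<integral>\<^sup>+z. (ennreal K + e) * indicator (B n) z \<partial>lborel)"
      by (simp add: nn_integral_cmult)
    also have "\<dots> \<le> (\<integral>\<^sup>+z. q z * indicator (B n) z \<partial>lborel)"
      by (intro nn_integral_mono) (auto simp: B_def indicator_def less_imp_le)
    also have "\<dots> \<le> ennreal K * emeasure lborel (B n)"
      by (intro sets) measurable
    finally have "ennreal K * emeasure lborel (B n) + e * emeasure lborel (B n) \<le> ennreal K * emeasure lborel (B n) + 0"
      by (simp add: distrib_right)
    then have "e * emeasure lborel (B n) = 0"
      using finite by (subst (asm) ennreal_add_left_cancel_le) (auto simp: ennreal_mult_eq_top_iff)
    then show ?thesis
      using \<open>0 < e\<close> by auto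
  qed
  then have null: "(\<Union>n. B n) \<in> null_sets lborel"
    by blast
  have cover: "{z. \<not> q z \<le> ennreal K + e} \<subseteq> (\<Union>n. B n)"
  proof
    fix z assume "z \<in> {z. \<not> q z \<le> ennreal K + e}"
    moreover obtain n :: nat where "\<bar>z\<bar> \<le> real n"
      using real_arch_simple by blast
    ultimately show "z \<in> (\<Union>n. B n)"
      by (intro UN_I[of n]) (auto simp: B_def abs_le_iff)
  qed
  show "AE z in lborel. q z \<le> ennreal K + e"
    by (rule AE_I'[OF null]) (use cover in auto)
qed

lemma subordinator_density_pos:
  "subordinator_density M X p \<Longrightarrow> 0 < r \<Longrightarrow> 0 < w \<Longrightarrow> 0 < p r w"
  by (simp add: subordinator_density_def)

lemma subordinator_density_eq_0:
  "subordinator_density M X p \<Longrightarrow> 0 < r \<Longrightarrow> w \<le> 0 \<Longrightarrow> p r w = 0"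
  by (simp add: subordinator_density_def)

lemma subordinator_density_nonneg:
  "subordinator_density M X p \<Longrightarrow> 0 < r \<Longrightarrow> 0 \<le> p r w"
  by (metis less_eq_real_def not_le subordinator_density_eq_0 subordinator_density_pos)

lemma subordinator_increment_distributed:
  assumes sub: "subordinator M X" and dens: "subordinator_density M X p"
    and r: "0 \<le> r" "r < T"
  shows "distributed M lborel (\<lambda>\<omega>. X T \<omega> - X r \<omega>) (\<lambda>w. ennreal (p (T - r) w))"
proof -
  have [measurable]: "X r \<in> borel_measurable M" "X T \<in> borel_measurable M" "X (T - r) \<in> borel_measurable M"
    using sub r unfolding subordinator_def by auto
  have "distr M lborel (\<lambda>\<omega>. X T \<omega> - X r \<omega>) = distr M borel (\<lambda>\<omega>. X T \<omega> - X r \<omega>)"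
    by (rule distr_cong) auto
  also have "\<dots> = distr M borel (X (T - r))"
    using sub r unfolding subordinator_def by auto
  also have "\<dots> = distr M lborel (X (T - r))"
    by (rule distr_cong) auto
  finally show ?thesis
    using dens r unfolding subordinator_density_def distributed_def by auto
qed

lemma subordinator_chapman_kolmogorov:
  assumes sub: "subordinator M X" and dens: "subordinator_density M X p"
    and r: "0 < r" "r < T"
  shows "AE h in lborel. ennreal (p T h) = (\<integral>\<^sup>+y. ennreal (p r (h - y)) * ennreal (p (T - r) y) \<partial>lborel)"
proof -
  interpret prob_space M
    using sub unfolding subordinator_def by blast
  define ts where "ts i = (if i = 0 then 0 else if i = 1 then r else T)" for i :: nat
  have "mono ts" "0 \<le> ts 0"
    using r by (auto simp: ts_def mono_def)
  then have "indep_vars (\<lambda>_. borel) (\<lambda>i \<omega>. X (ts (Suc i)) \<omega> - X (ts i) \<omega>) {..<2}"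
    using sub unfolding subordinator_def by blast
  moreover have "{..<2::nat} = insert 0 {1}"
    by auto
  ultimately have "indep_var borel (\<lambda>\<omega>. X r \<omega> - X 0 \<omega>) borel (\<lambda>\<omega>. X T \<omega> - X r \<omega>)"
    using indep_vars_sum[of "{1}" 0 "\<lambda>i \<omega>. X (ts (Suc i)) \<omega> - X (ts i) \<omega>"] by (simp add: ts_def)
  moreover have "distributed M lborel (\<lambda>\<omega>. X r \<omega> - X 0 \<omega>) (\<lambda>w. ennreal (p r w))"
    using subordinator_increment_distributed[OF sub dens, of 0 r] r by simp
  moreover have "distributed M lborel (\<lambda>\<omega>. X T \<omega> - X r \<omega>) (\<lambda>w. ennreal (p (T - r) w))"
    using subordinator_increment_distributed[OF sub dens, of r T] r by simp
  ultimately have "distributed M lborel (\<lambda>\<omega>. X T \<omega> - X 0 \<omega>)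
      (\<lambda>h. \<integral>\<^sup>+y. ennreal (p r (h - y)) * ennreal (p (T - r) y) \<partial>lborel)"
    using distributed_convolution by fastforce
  moreover have "distributed M lborel (\<lambda>\<omega>. X T \<omega> - X 0 \<omega>) (\<lambda>w. ennreal (p T w))"
    using subordinator_increment_distributed[OF sub dens, of 0 T] r by simp
  ultimately show ?thesis
    using distributed_unique by blast
qed

lemma subordinator_chapman_kolmogorov_AE:
  assumes sub: "subordinator M X" and dens: "subordinator_density M X p"
    and pm[measurable]: "(\<lambda>(t, w). p t w) \<in> borel_measurable (lborel \<Otimes>\<^sub>M lborel)"
  shows "AE h in lborel. AE u in lborel. u \<in> {s<..<t} \<longrightarrow>
     ennreal (p (t - s) h) = (\<integral>\<^sup>+y. ennreal (p (u - s) (h - y)) * ennreal (p (t - u) y) \<partial>lborel)"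
proof -
  have "AE u in lborel. AE h in lborel. u \<in> {s<..<t} \<longrightarrow>
     ennreal (p (t - s) h) = (\<integral>\<^sup>+y. ennreal (p (u - s) (h - y)) * ennreal (p (t - u) y) \<partial>lborel)"
  proof (rule AE_I2)
    fix u
    show "AE h in lborel. u \<in> {s<..<t} \<longrightarrow>
      ennreal (p (t - s) h) = (\<integral>\<^sup>+y. ennreal (p (u - s) (h - y)) * ennreal (p (t - u) y) \<partial>lborel)"
      using subordinator_chapman_kolmogorov[OF sub dens, of "u - s" "t - s"]
      by (cases "u \<in> {s<..<t}") auto
  qed
  then show ?thesis
    by (subst (asm) lborel_pair.AE_commute) measurable
qed

lemma AE_lborel_obtain_in_interval:
  fixes a b :: real
  assumes "AE x in lborel. P x" and "a < b"
  obtains x where "x \<in> {a<..<b}" and "P x"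
proof (rule ccontr)
  assume "\<not> thesis"
  with that have "AE x in lborel. x \<notin> {a<..<b}"
    using assms(1) by (auto elim: AE_mp)
  moreover have "{a<..<b} \<in> sets lborel"
    by auto
  ultimately have "{a<..<b} \<in> null_sets lborel"
    by (simp add: AE_iff_null_sets)
  with \<open>a < b\<close> show False
    by (simp add: null_sets_def)
qed

text \<open>The integral under the supremum in the hypothesis: the expected time integral of q
along the bridge of the subordinator from x at time s to y at time t.\<close>

definition bridge_potential ::
    "(real \<Rightarrow> real \<Rightarrow> real) \<Rightarrow> (real \<Rightarrow> ennreal) \<Rightarrow> real \<Rightarrow> real \<Rightarrow> real \<Rightarrow> real \<Rightarrow> ennreal" where
  "bridge_potential p q s t x y =
     (\<integral>\<^sup>+u. indicator {s..t} u *
        (\<integral>\<^sup>+z. ennreal (trans_dens p s x u z * trans_dens p u z t y / trans_dens p s x t y) * q z \<partial>lborel)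
      \<partial>lborel)"

lemma trans_dens_eq:
  assumes "subordinator_density M X p" and "s < u"
  shows "trans_dens p s x u z = p (u - s) (z - x)"
  using assms subordinator_density_eq_0[OF assms(1), of "u - s" "z - x"]
  by (auto simp: trans_dens_def)

lemma bridge_potential_unnormalized_le:
  assumes dens: "subordinator_density M X p"
    and pm[measurable]: "(\<lambda>(t, w). p t w) \<in> borel_measurable (lborel \<Otimes>\<^sub>M lborel)"
    and q[measurable]: "q \<in> borel_measurable lborel"
    and "s < t" "x < y"
  shows "(\<integral>\<^sup>+u. indicator {s<..<t} u *
            (\<integral>\<^sup>+z. ennreal (p (u - s) (z - x)) * ennreal (p (t - u) (y - z)) * q z \<partial>lborel) \<partial>lborel)
    \<le> ennreal (p (t - s) (y - x)) * bridge_potential p q s t x y"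
proof -
  define D where "D = p (t - s) (y - x)"
  have D: "0 < D" and "trans_dens p s x t y = D"
    using assms(4,5) subordinator_density_pos[OF dens] by (auto simp: D_def trans_dens_def)
  have "ennreal (p (u - s) (z - x)) * ennreal (p (t - u) (y - z)) * q z
      = ennreal D * (ennreal (trans_dens p s x u z * trans_dens p u z t y / trans_dens p s x t y) * q z)"
    if "u \<in> {s<..<t}" for u z
  proof -
    have "0 \<le> p (u - s) (z - x) * p (t - u) (y - z)"
      using that subordinator_density_nonneg[OF dens] by auto
    then have "ennreal (p (u - s) (z - x) * p (t - u) (y - z))
        = ennreal D * ennreal (p (u - s) (z - x) * p (t - u) (y - z) / D)"
      using D by (simp add: ennreal_mult[symmetric])
    then show ?thesis
      using that subordinator_density_nonneg[OF dens, of _ "z - x"] subordinator_density_nonneg[OF dens, of _ "y - z"]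
        \<open>trans_dens p s x t y = D\<close>
      by (simp add: trans_dens_eq[OF dens] ennreal_mult mult.assoc)
  qed
  then have "(\<integral>\<^sup>+u. indicator {s<..<t} u *
            (\<integral>\<^sup>+z. ennreal (p (u - s) (z - x)) * ennreal (p (t - u) (y - z)) * q z \<partial>lborel) \<partial>lborel)
    = (\<integral>\<^sup>+u. ennreal D * (indicator {s<..<t} u *
            (\<integral>\<^sup>+z. ennreal (trans_dens p s x u z * trans_dens p u z t y / trans_dens p s x t y) * q z \<partial>lborel)) \<partial>lborel)"
    by (intro nn_integral_cong) (auto simp: indicator_def nn_integral_cmult trans_dens_def)
  also have "\<dots> \<le> (\<integral>\<^sup>+u. ennreal D * (indicator {s..t} u *
            (\<integral>\<^sup>+z. ennreal (trans_dens p s x u z * trans_dens p u z t y / trans_dens p s x t y) * q z \<partial>lborel)) \<partial>lborel)"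
    by (intro nn_integral_mono mult_left_mono) (auto simp: indicator_def)
  also have "\<dots> = ennreal D * bridge_potential p q s t x y"
    unfolding bridge_potential_def by (rule nn_integral_cmult) (simp add: trans_dens_def)
  finally show ?thesis
    by (simp add: D_def)
qed

lemma nn_integral_shifted_convolution:
  fixes f g :: "real \<Rightarrow> real"
  assumes [measurable]: "f \<in> borel_measurable borel" "g \<in> borel_measurable borel"
    and f0: "\<And>w. w \<le> 0 \<Longrightarrow> f w = 0" and g0: "\<And>w. w \<le> 0 \<Longrightarrow> g w = 0"
    and z: "z \<in> {a + h..b}"
  shows "(\<integral>\<^sup>+x. indicator {a..b} x * (ennreal (f (z - x)) * ennreal (g (x + h - z))) \<partial>lborel)
    = (\<integral>\<^sup>+y. ennreal (f (h - y)) * ennreal (g y) \<partial>lborel)"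
proof -
  have "indicator {a..b} x * (ennreal (f (z - x)) * ennreal (g (x + h - z)))
      = ennreal (f (z - x)) * ennreal (g (x + h - z))" for x
    using z f0[of "z - x"] g0[of "x + h - z"] by (cases "x \<in> {a..b}") auto
  then show ?thesis
    using nn_integral_real_affine[of "\<lambda>x. ennreal (f (z - x)) * ennreal (g (x + h - z))" 1 "z - h"]
    by simp
qed

lemma set_nn_integral_mult_convolution_le:
  assumes dens: "subordinator_density M X p"
    and pm[measurable]: "(\<lambda>(t, w). p t w) \<in> borel_measurable (lborel \<Otimes>\<^sub>M lborel)"
    and q[measurable]: "q \<in> borel_measurable lborel"
  shows "(\<integral>\<^sup>+z. q z * indicator {a + h..b} z \<partial>lborel) *
      (\<integral>\<^sup>+u. indicator {s<..<t} u * (\<integral>\<^sup>+y. ennreal (p (u - s) (h - y)) * ennreal (p (t - u) y) \<partial>lborel) \<partial>lborel)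
    \<le> (\<integral>\<^sup>+x. indicator {a..b} x * (\<integral>\<^sup>+u. indicator {s<..<t} u *
      (\<integral>\<^sup>+z. ennreal (p (u - s) (z - x)) * ennreal (p (t - u) (x + h - z)) * q z \<partial>lborel) \<partial>lborel) \<partial>lborel)"
    (is "?Q * ?C \<le> _")
proof -
  define conv where "conv u = (\<integral>\<^sup>+y. ennreal (p (u - s) (h - y)) * ennreal (p (t - u) y) \<partial>lborel)" for u
  define G where "G u z = indicator {s<..<t} u * (q z * indicator {a + h..b} z)" for u z
  define P where "P x u z = indicator {a..b} x * (ennreal (p (u - s) (z - x)) * ennreal (p (t - u) (x + h - z)))"
    for x u z
  have x_integral: "(\<integral>\<^sup>+x. G u z * P x u z \<partial>lborel) = G u z * conv u" for u z
  proof (cases "u \<in> {s<..<t} \<and> z \<in> {a + h..b}")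
    case True
    then have "(\<integral>\<^sup>+x. P x u z \<partial>lborel) = conv u"
      unfolding P_def conv_def
      by (intro nn_integral_shifted_convolution) (auto intro: subordinator_density_eq_0[OF dens])
    then show ?thesis
      by (simp add: nn_integral_cmult P_def)
  qed (auto simp: G_def)
  have "?Q * ?C = (\<integral>\<^sup>+u. indicator {s<..<t} u * conv u * ?Q \<partial>lborel)"
    by (subst nn_integral_multc) (simp_all add: conv_def mult.commute)
  also have "\<dots> = (\<integral>\<^sup>+u. (\<integral>\<^sup>+z. indicator {s<..<t} u * conv u * (q z * indicator {a + h..b} z) \<partial>lborel) \<partial>lborel)"
    by (simp add: nn_integral_cmult)
  also have "\<dots> = (\<integral>\<^sup>+u. (\<integral>\<^sup>+z. G u z * conv u \<partial>lborel) \<partial>lborel)"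
    by (simp add: G_def mult_ac)
  also have "\<dots> = (\<integral>\<^sup>+u. (\<integral>\<^sup>+z. (\<integral>\<^sup>+x. G u z * P x u z \<partial>lborel) \<partial>lborel) \<partial>lborel)"
    by (simp add: x_integral)
  also have "\<dots> = (\<integral>\<^sup>+u. (\<integral>\<^sup>+x. (\<integral>\<^sup>+z. G u z * P x u z \<partial>lborel) \<partial>lborel) \<partial>lborel)"
    by (intro nn_integral_cong lborel_pair.Fubini') (simp add: G_def P_def)
  also have "\<dots> = (\<integral>\<^sup>+x. (\<integral>\<^sup>+u. (\<integral>\<^sup>+z. G u z * P x u z \<partial>lborel) \<partial>lborel) \<partial>lborel)"
    by (rule lborel_pair.Fubini') (simp add: G_def P_def)
  also have "\<dots> \<le> (\<integral>\<^sup>+x. (\<integral>\<^sup>+u. (\<integral>\<^sup>+z. indicator {a..b} x * (indicator {s<..<t} u *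
      (ennreal (p (u - s) (z - x)) * ennreal (p (t - u) (x + h - z)) * q z)) \<partial>lborel) \<partial>lborel) \<partial>lborel)"
    by (intro nn_integral_mono) (simp add: G_def P_def mult_ac split: split_indicator)
  also have "\<dots> = (\<integral>\<^sup>+x. indicator {a..b} x * (\<integral>\<^sup>+u. indicator {s<..<t} u *
      (\<integral>\<^sup>+z. ennreal (p (u - s) (z - x)) * ennreal (p (t - u) (x + h - z)) * q z \<partial>lborel) \<partial>lborel) \<partial>lborel)"
    by (simp add: nn_integral_cmult)
  finally show ?thesis .
qed

lemma set_nn_integral_le_of_bridge_bound_at:
  assumes dens: "subordinator_density M X p"
    and pm[measurable]: "(\<lambda>(t, w). p t w) \<in> borel_measurable (lborel \<Otimes>\<^sub>M lborel)"
    and q[measurable]: "q \<in> borel_measurable lborel"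
    and st: "s < t" and ab: "a < b" and h: "0 < h"
    and bridge: "\<And>x y. x < y \<Longrightarrow> bridge_potential p q s t x y \<le> S"
    and CK: "AE u in lborel. u \<in> {s<..<t} \<longrightarrow>
       ennreal (p (t - s) h) = (\<integral>\<^sup>+y. ennreal (p (u - s) (h - y)) * ennreal (p (t - u) y) \<partial>lborel)"
  shows "(\<integral>\<^sup>+z. q z * indicator {a + h..b} z \<partial>lborel) * ennreal (t - s) \<le> S * ennreal (b - a)"
proof -
  define D where "D = ennreal (p (t - s) h)"
  have "0 < p (t - s) h"
    using subordinator_density_pos[OF dens] st h by simp
  then have D: "D \<noteq> 0" "D \<noteq> \<top>"
    by (simp_all add: D_def)
  have "(\<integral>\<^sup>+u. indicator {s<..<t} u * (\<integral>\<^sup>+y. ennreal (p (u - s) (h - y)) * ennreal (p (t - u) y) \<partial>lborel) \<partial>lborel)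
      = (\<integral>\<^sup>+u. D * indicator {s<..<t} u \<partial>lborel)"
    using CK by (intro nn_integral_cong_AE) (auto simp: D_def indicator_def)
  also have "\<dots> = D * ennreal (t - s)"
    using st by (simp add: nn_integral_cmult)
  finally have convolution: "(\<integral>\<^sup>+u. indicator {s<..<t} u *
      (\<integral>\<^sup>+y. ennreal (p (u - s) (h - y)) * ennreal (p (t - u) y) \<partial>lborel) \<partial>lborel) = D * ennreal (t - s)" .
  have bridge_bound: "(\<integral>\<^sup>+u. indicator {s<..<t} u *
      (\<integral>\<^sup>+z. ennreal (p (u - s) (z - x)) * ennreal (p (t - u) (x + h - z)) * q z \<partial>lborel) \<partial>lborel)
    \<le> D * S" for x
  proof -
    have "(\<integral>\<^sup>+u. indicator {s<..<t} u *
        (\<integral>\<^sup>+z. ennreal (p (u - s) (z - x)) * ennreal (p (t - u) (x + h - z)) * q z \<partial>lborel) \<partial>lborel)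
      \<le> D * bridge_potential p q s t x (x + h)"
      using bridge_potential_unnormalized_le[OF dens pm q st, of x "x + h"] h by (simp add: D_def)
    also have "\<dots> \<le> D * S"
      using bridge h by (intro mult_left_mono) auto
    finally show ?thesis .
  qed
  have "D * ((\<integral>\<^sup>+z. q z * indicator {a + h..b} z \<partial>lborel) * ennreal (t - s))
      = (\<integral>\<^sup>+z. q z * indicator {a + h..b} z \<partial>lborel) * (\<integral>\<^sup>+u. indicator {s<..<t} u *
          (\<integral>\<^sup>+y. ennreal (p (u - s) (h - y)) * ennreal (p (t - u) y) \<partial>lborel) \<partial>lborel)"
    unfolding convolution by (simp add: mult_ac)
  also have "\<dots> \<le> (\<integral>\<^sup>+x. indicator {a..b} x * (\<integral>\<^sup>+u. indicator {s<..<t} u *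
      (\<integral>\<^sup>+z. ennreal (p (u - s) (z - x)) * ennreal (p (t - u) (x + h - z)) * q z \<partial>lborel) \<partial>lborel) \<partial>lborel)"
    by (rule set_nn_integral_mult_convolution_le[OF dens pm q])
  also have "\<dots> \<le> (\<integral>\<^sup>+x. indicator {a..b} x * (D * S) \<partial>lborel)"
    by (intro nn_integral_mono mult_left_mono bridge_bound) simp
  also have "\<dots> = D * (S * ennreal (b - a))"
    using ab by (subst nn_integral_multc) (simp_all add: mult_ac)
  finally show ?thesis
    using D by (simp add: ennreal_mult_le_mult_iff)
qed

lemma set_nn_integral_le_of_bridge_bound:
  assumes sub: "subordinator M X" and dens: "subordinator_density M X p"
    and pm[measurable]: "(\<lambda>(t, w). p t w) \<in> borel_measurable (lborel \<Otimes>\<^sub>M lborel)"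
    and q[measurable]: "q \<in> borel_measurable lborel"
    and st: "s < t" and S: "0 \<le> S"
    and bridge: "\<And>x y. x < y \<Longrightarrow> bridge_potential p q s t x y \<le> ennreal S"
    and ab: "a < b"
  shows "(\<integral>\<^sup>+z. q z * indicator {a..b} z \<partial>lborel) \<le> ennreal (S / (t - s) * (b - a))"
proof (rule ennreal_le_epsilon)
  fix e :: real assume "0 < e"
  define K where "K = S / (t - s)"
  define \<delta> where "\<delta> = e / (K + 1)"
  have K: "0 \<le> K"
    using S st by (simp add: K_def)
  then have "0 < \<delta>"
    using \<open>0 < e\<close> by (simp add: \<delta>_def)
  obtain h where h: "h \<in> {0<..<\<delta>}" and CK: "AE u in lborel. u \<in> {s<..<t} \<longrightarrow>
      ennreal (p (t - s) h) = (\<integral>\<^sup>+y. ennreal (p (u - s) (h - y)) * ennreal (p (t - u) y) \<partial>lborel)"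
    using subordinator_chapman_kolmogorov_AE[OF sub dens pm] \<open>0 < \<delta>\<close> by (rule AE_lborel_obtain_in_interval)
  have "ennreal (t - s) * (\<integral>\<^sup>+z. q z * indicator {a..b} z \<partial>lborel)
      \<le> (\<integral>\<^sup>+z. q z * indicator {a - \<delta> + h..b} z \<partial>lborel) * ennreal (t - s)"
    using h by (subst mult.commute, intro mult_right_mono nn_integral_mono) (auto split: split_indicator)
  also have "\<dots> \<le> ennreal S * ennreal (b - (a - \<delta>))"
    using h ab \<open>0 < \<delta>\<close> bridge CK
    by (intro set_nn_integral_le_of_bridge_bound_at[OF dens pm q st]) auto
  also have "\<dots> = ennreal (S * (b - (a - \<delta>)))"
    using S ab \<open>0 < \<delta>\<close> by (simp add: ennreal_mult)
  also have "\<dots> = ennreal ((t - s) * (K * (b - a) + K * \<delta>))"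
  proof -
    have "S = (t - s) * K"
      using st by (simp add: K_def)
    then show ?thesis
      by (simp only:) (simp add: algebra_simps)
  qed
  also have "\<dots> = ennreal (t - s) * ennreal (K * (b - a) + K * \<delta>)"
    using st K ab \<open>0 < \<delta>\<close> by (intro ennreal_mult) auto
  finally have "(\<integral>\<^sup>+z. q z * indicator {a..b} z \<partial>lborel) \<le> ennreal (K * (b - a) + K * \<delta>)"
    using st by (simp add: ennreal_mult_le_mult_iff)
  also have "\<dots> = ennreal (K * (b - a)) + ennreal (K * \<delta>)"
    using K ab \<open>0 < \<delta>\<close> by (intro ennreal_plus) auto
  also have "ennreal (K * \<delta>) \<le> e"
    using K \<open>0 < e\<close> by (intro ennreal_leI) (simp add: \<delta>_def field_simps)
  finally show "(\<integral>\<^sup>+z. q z * indicator {a..b} z \<partial>lborel) \<le> ennreal (S / (t - s) * (b - a)) + ennreal e"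
    by (simp add: K_def add_left_mono)
qed

theorem theorem3p3:
  fixes M :: "'a measure" and X :: "real \<Rightarrow> 'a \<Rightarrow> real"
    and p :: "real \<Rightarrow> real \<Rightarrow> real" and q :: "real \<Rightarrow> ennreal" and s t :: real
  assumes "subordinator M X"
    and "subordinator_density M X p"
    and "(\<lambda>(t, w). p t w) \<in> borel_measurable (lborel \<Otimes>\<^sub>M lborel)"
    and "q \<in> borel_measurable lborel"
    and "s < t"
    and "(SUP xy\<in>{(x, y). x < y}.
           \<integral>\<^sup>+ u. indicator {s..t} u *
             (\<integral>\<^sup>+ z. ennreal (trans_dens p s (fst xy) u z * trans_dens p u z t (snd xy)
                              / trans_dens p s (fst xy) t (snd xy)) * q z \<partial>lborel) \<partial>lborel) < \<infinity>"
  shows "\<exists>C::real. AE z in lborel. q z \<le> ennreal C"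
proof -
  let ?sup = "SUP xy\<in>{(x, y). x < y}. bridge_potential p q s t (fst xy) (snd xy)"
  have "?sup < \<infinity>"
    using assms(6) by (simp add: bridge_potential_def)
  then obtain S where S: "?sup = ennreal S" "0 \<le> S"
    by (cases ?sup rule: ennreal_cases) auto
  have bridge: "bridge_potential p q s t x y \<le> ennreal S" if "x < y" for x y
    using that by (auto simp: S(1)[symmetric] intro!: SUP_upper2[of "(x, y)"])
  have "AE z in lborel. q z \<le> ennreal (S / (t - s))"
    using assms(4,5) S(2)
    by (intro AE_le_of_set_nn_integral_le set_nn_integral_le_emeasure_of_intervals
        set_nn_integral_le_of_bridge_bound[OF assms(1-5) S(2) bridge]) auto
  then show ?thesis
    by blast
qed

end
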